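(* Let $(\mathcal C,\langle\cdot,\cdot\rangle_{\mathcal C})$ be a complex Hilbert space, let $0<r<r_0<1$ and $R=1/r$, and let $\Phi$ be an $\mathbf L(\mathcal C,\mathcal C)$-valued function analytic in $\{|z|<r_0\}$ and continuous on $\{|z|\le r_0\}$ in the operator topology. Put $M=\max_{|z|\le r_0}\|\Phi(z)\|$ and \[ C_\Phi(a,b)=\frac{\Phi(a)+\Phi(b)^*}{1-a\overline{b}},\qquad |a|,|b|\le r_0 . \] For $f,g$ in $\mathbf H_{2,r}^-(\mathcal C)$, $f(z)=\sum_{u\ge1}f_uz^{-u}$, $g(z)=\sum_{u\ge1}g_uz^{-u}$, define \[ [f,g]_{\Phi}=\frac{1}{4\pi^2}\iint_{\substack{|a|=r\\|b|=r}}\left\langle C_\Phi(a,b)f(a),g(b)\right\rangle_{\mathcal C}\,da\,d\overline{b}. \] Then \[ |[f,g]_{\Phi}|\le \frac{2Mr_0^2}{(1-r_0^2)^2}\left(\sum_{u=1}^\infty R^{2u}\|f_u\|_{\mathcal C}^2\right)^{1/2}\left(\sum_{u=1}^\infty R^{2u}\|g_u\|_{\mathcal C}^2\right)^{1/2}, \] and in particular $[\cdot,\cdot]_\Phi$ is jointly continuous with respect to the topology of $\mathbf H_{2,r}^-(\mathcal C)$.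
   Context: $\mathbf H_{2,r}^-(\mathcal C)$ is the Hilbert space of power series $f(z)=\sum_{u=1}^\infty f_u z^{-u}$, $f_u\in\mathcal C$, with $\sum_{u=1}^\infty R^{2u}\|f_u\|_{\mathcal C}^2<\infty$ and inner product $\langle f,g\rangle=\sum_{u\ge1}R^{2u}\langle f_u,g_u\rangle_{\mathcal C}$. On the circle $|a|=r$, $f(a)$ denotes the sum of the series $\sum_u f_ua^{-u}$ (convergent in $L^2$ of the circle). The integral is an iterated complex contour integral over the circles $|a|=r$ and $|b|=r$, with $d\overline{b}$ the conjugate of $db$ (so for $b=re^{i\varphi}$, $d\overline{b}=-i\overline{b}\,d\varphi$, and for $a=re^{i\theta}$, $da=ia\,d\theta$). *)

theory Defs
  imports "HOL-Analysis.Analysis" "HOL-Complex_Analysis.Contour_Integration"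
begin

text \<open>The distribution has no complex inner product spaces, so we introduce a type class:
  a real Banach space equipped with a complex scalar multiplication (compatible with the
  real one) and a complex inner product (linear in the first argument, conjugate symmetric)
  inducing the norm.\<close>

class complex_inner = banach +
  fixes scaleC :: "complex \<Rightarrow> 'a \<Rightarrow> 'a" (infixr "*\<^sub>C" 75)
    and cinner :: "'a \<Rightarrow> 'a \<Rightarrow> complex"
  assumes scaleC_add_right: "a *\<^sub>C (x + y) = a *\<^sub>C x + a *\<^sub>C y"
    and scaleC_add_left: "(a + b) *\<^sub>C x = a *\<^sub>C x + b *\<^sub>C x"
    and scaleC_scaleC: "a *\<^sub>C (b *\<^sub>C x) = (a * b) *\<^sub>C x"
    and scaleC_one: "1 *\<^sub>C x = x"
    and scaleC_of_real: "complex_of_real t *\<^sub>C x = t *\<^sub>R x"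
    and cinner_commute: "cinner x y = cnj (cinner y x)"
    and cinner_add_left: "cinner (x + y) z = cinner x z + cinner y z"
    and cinner_scaleC_left: "cinner (a *\<^sub>C x) y = a * cinner x y"
    and cinner_self_norm: "cinner x x = complex_of_real ((norm x)\<^sup>2)"

definition bounded_clinear :: "('a::complex_inner \<Rightarrow> 'b::complex_inner) \<Rightarrow> bool" where
  "bounded_clinear T \<longleftrightarrow>
     (\<forall>x y. T (x + y) = T x + T y) \<and> (\<forall>c x. T (c *\<^sub>C x) = c *\<^sub>C T x) \<and>
     (\<exists>K. \<forall>x. norm (T x) \<le> norm x * K)"

definition adjoint :: "('a::complex_inner \<Rightarrow> 'a) \<Rightarrow> 'a \<Rightarrow> 'a" where
  "adjoint T = (THE S. \<forall>x y. cinner (S x) y = cinner x (T y))"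

definition op_continuous_on :: "complex set \<Rightarrow> (complex \<Rightarrow> 'a::complex_inner \<Rightarrow> 'a) \<Rightarrow> bool" where
  "op_continuous_on S \<Phi> \<longleftrightarrow>
     (\<forall>z\<in>S. ((\<lambda>w. onorm (\<lambda>x. \<Phi> w x - \<Phi> z x)) \<longlongrightarrow> 0) (at z within S))"

definition op_holomorphic_on :: "complex set \<Rightarrow> (complex \<Rightarrow> 'a::complex_inner \<Rightarrow> 'a) \<Rightarrow> bool" where
  "op_holomorphic_on S \<Phi> \<longleftrightarrow>
     (\<forall>z\<in>S. \<exists>D. bounded_clinear D \<and>
        ((\<lambda>w. onorm (\<lambda>x. \<Phi> w x - \<Phi> z x - (w - z) *\<^sub>C D x) / cmod (w - z)) \<longlongrightarrow> 0) (at z))"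

text \<open>A series f(z) = sum_{u>=1} f_u z^{-u} is given by its coefficients c :: nat => 'a;
  the value c 0 is irrelevant (never used).\<close>

definition in_H2minus :: "real \<Rightarrow> (nat \<Rightarrow> 'a::complex_inner) \<Rightarrow> bool" where
  "in_H2minus r c \<longleftrightarrow> summable (\<lambda>u. (1 / r) ^ (2 * Suc u) * (norm (c (Suc u)))\<^sup>2)"

text \<open>F is (a representative of) the L^2 sum on the circle |a| = r of the series
  sum_{u>=1} c_u a^{-u}: measurable, and the partial sums converge to it in L^2
  (circle parametrised by a = r e^{i theta}, theta in [0, 2 pi]).\<close>
definition circle_L2_sum :: "real \<Rightarrow> (nat \<Rightarrow> 'a::complex_inner) \<Rightarrow> (complex \<Rightarrow> 'a) \<Rightarrow> bool" where
  "circle_L2_sum r c F \<longleftrightarrow>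
     (\<lambda>\<theta>. F (complex_of_real r * cis \<theta>)) \<in> borel_measurable (restrict_space lborel {0..2*pi}) \<and>
     ((\<lambda>N. \<integral>\<^sup>+\<theta>\<in>{0..2*pi}. ennreal ((norm (F (complex_of_real r * cis \<theta>)
            - (\<Sum>u\<in>{1..N}. (inverse (complex_of_real r * cis \<theta>)) ^ u *\<^sub>C c u)))\<^sup>2) \<partial>lborel)
       \<longlonglongrightarrow> 0)"

definition C_kernel :: "(complex \<Rightarrow> 'a::complex_inner \<Rightarrow> 'a) \<Rightarrow> complex \<Rightarrow> complex \<Rightarrow> 'a \<Rightarrow> 'a" where
  "C_kernel \<Phi> a b x = inverse (1 - a * cnj b) *\<^sub>C (\<Phi> a x + adjoint (\<Phi> b) x)"

text \<open>[f,g]_Phi = 1/(4 pi^2) iint <C(a,b) f(a), g(b)> da d(conj b), as an iterated contour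
  integral over |a| = r (inner) and |b| = r (outer); integration against d(conj b) is
  expressed as  int h d(conj b) = conj (int (conj h) db).\<close>
definition form_bracket :: "(complex \<Rightarrow> 'a::complex_inner \<Rightarrow> 'a) \<Rightarrow> real \<Rightarrow> (complex \<Rightarrow> 'a) \<Rightarrow> (complex \<Rightarrow> 'a) \<Rightarrow> complex" where
  "form_bracket \<Phi> r F G =
     1 / (4 * complex_of_real (pi\<^sup>2)) *
     cnj (contour_integral (circlepath 0 r)
       (\<lambda>b. cnj (contour_integral (circlepath 0 r)
                  (\<lambda>a. cinner (C_kernel \<Phi> a b (F a)) (G b)))))"

end

theory Submission
  imports Defs
begin

text \<open>
  On the circle \<open>|a| = |b| = r\<close> the kernel is bounded: \<open>|1 - a conj b| \<ge> 1 - r\<^sup>2\<close>, and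
  \<open>\<parallel>\<Phi>(b)\<^sup>*\<parallel> \<le> \<parallel>\<Phi>(b)\<parallel>\<close> once the adjoint is known to exist (Riesz representation), so
  \<open>|\<langle>C(a,b)x, y\<rangle>| \<le> 2M/(1 - r\<^sup>2) \<parallel>x\<parallel> \<parallel>y\<parallel>\<close>. Estimating both contour integrals by the
  integrals of the norms gives \<open>|[f,g]| \<le> r\<^sup>2/(4\<pi>\<^sup>2) \<cdot> 2M/(1 - r\<^sup>2) \<cdot> \<parallel>F\<parallel>\<^sub>1 \<parallel>G\<parallel>\<^sub>1\<close>
  with \<open>L\<^sup>1\<close> norms on \<open>[0, 2\<pi>]\<close>. By Cauchy-Schwarz \<open>\<parallel>F\<parallel>\<^sub>1 \<le> \<surd>(2\<pi>) \<parallel>F\<parallel>\<^sub>2\<close>, and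
  \<open>\<parallel>F\<parallel>\<^sub>2\<^sup>2 \<le> 2\<pi> \<Sum>\<^sub>u R\<^bsup>2u\<^esup> \<parallel>f\<^sub>u\<parallel>\<^sup>2\<close> because the partial sums converge to \<open>F\<close> in \<open>L\<^sup>2\<close> and
  satisfy Parseval's identity. Finally \<open>r\<^sup>2/(1 - r\<^sup>2) \<le> r\<^sub>0\<^sup>2/(1 - r\<^sub>0\<^sup>2)\<^sup>2\<close>.
\<close>

section \<open>Complex inner product spaces\<close>

lemma cinner_add_right: "cinner x (y + z) = cinner x y + cinner x z"
  by (metis cinner_commute cinner_add_left complex_cnj_add)

lemma cinner_scaleC_right: "cinner x (a *\<^sub>C y) = cnj a * cinner x y"
  by (metis cinner_commute cinner_scaleC_left complex_cnj_mult)

lemma cinner_zero_left [simp]: "cinner 0 y = 0"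
  using cinner_add_left[of 0 0 y] by simp

lemma cinner_zero_right [simp]: "cinner x 0 = 0"
  by (metis cinner_commute cinner_zero_left complex_cnj_zero)

lemma cinner_minus_left: "cinner (- x) y = - cinner x y"
  using cinner_add_left[of "- x" x y] by (simp add: eq_neg_iff_add_eq_0)

lemma cinner_diff_left: "cinner (x - y) z = cinner x z - cinner y z"
  using cinner_add_left[of x "- y" z] by (simp add: cinner_minus_left)

lemma cinner_diff_right: "cinner x (y - z) = cinner x y - cinner x z"
  by (metis cinner_commute cinner_diff_left complex_cnj_diff)

lemma cinner_sum_left: "cinner (\<Sum>i\<in>A. f i) y = (\<Sum>i\<in>A. cinner (f i) y)"
  by (induction A rule: infinite_finite_induct) (simp_all add: cinner_add_left)

lemma cinner_sum_right: "cinner x (\<Sum>i\<in>A. f i) = (\<Sum>i\<in>A. cinner x (f i))"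
  by (induction A rule: infinite_finite_induct) (simp_all add: cinner_add_right)

lemma cinner_eq_zero_iff [simp]: "cinner x x = 0 \<longleftrightarrow> x = 0"
  by (simp add: cinner_self_norm)

lemma norm_scaleC: "norm (a *\<^sub>C x) = cmod a * norm x"
proof -
  have "cinner (a *\<^sub>C x) (a *\<^sub>C x) = (a * cnj a) * cinner x x"
    by (simp add: cinner_scaleC_left cinner_scaleC_right)
  then have "complex_of_real ((norm (a *\<^sub>C x))\<^sup>2) = complex_of_real ((cmod a * norm x)\<^sup>2)"
    by (simp add: cinner_self_norm power_mult_distrib flip: complex_norm_square)
  then show ?thesis
    by (simp only: of_real_eq_iff power2_eq_iff_nonneg norm_ge_zero mult_nonneg_nonneg)
qed

lemma norm_diff_projection:
  fixes x y :: "'a::complex_inner"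
  assumes "y \<noteq> 0"
  shows "(norm (x - (cinner x y / complex_of_real ((norm y)\<^sup>2)) *\<^sub>C y))\<^sup>2
           = (norm x)\<^sup>2 - (cmod (cinner x y))\<^sup>2 / (norm y)\<^sup>2"
proof -
  define c where "c = cinner x y"
  define n where "n = (norm y)\<^sup>2"
  define t where "t = c / complex_of_real n"
  have n: "n \<noteq> 0" using assms by (simp add: n_def)
  have "cinner (x - t *\<^sub>C y) (x - t *\<^sub>C y) = cinner x x - cnj t * c - t * cnj c + t * cnj t * cinner y y"
    by (simp add: cinner_diff_left cinner_diff_right cinner_scaleC_left cinner_scaleC_right
        c_def cinner_commute[of y x] algebra_simps)
  also have "cnj t * c = c * cnj c / complex_of_real n"
    by (simp add: t_def)
  also have "t * cnj c = c * cnj c / complex_of_real n"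
    by (simp add: t_def)
  also have "t * cnj t * cinner y y = c * cnj c / complex_of_real n"
    using n by (simp add: t_def n_def cinner_self_norm power2_eq_square)
  also have "c * cnj c / complex_of_real n = complex_of_real ((cmod c)\<^sup>2 / n)"
    by (simp flip: complex_norm_square)
  finally have "cinner (x - t *\<^sub>C y) (x - t *\<^sub>C y) = complex_of_real ((norm x)\<^sup>2 - (cmod c)\<^sup>2 / n)"
    by (simp add: cinner_self_norm)
  then show ?thesis
    by (simp only: cinner_self_norm of_real_eq_iff c_def n_def t_def)
qed

lemma cinner_Cauchy_Schwarz: "cmod (cinner x y) \<le> norm x * norm y"
proof (cases "y = 0")
  case False
  have "0 \<le> (norm x)\<^sup>2 - (cmod (cinner x y))\<^sup>2 / (norm y)\<^sup>2"
    using norm_diff_projection[OF False, of x] by (metis zero_le_power2)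
  then have "(cmod (cinner x y))\<^sup>2 \<le> (norm x * norm y)\<^sup>2"
    using False by (simp add: field_simps power_mult_distrib)
  then show ?thesis
    by (rule power2_le_imp_le) simp
qed simp

lemma parallelogram_law:
  fixes x y :: "'a::complex_inner"
  shows "(norm (x + y))\<^sup>2 + (norm (x - y))\<^sup>2 = 2 * (norm x)\<^sup>2 + 2 * (norm y)\<^sup>2"
proof -
  have "cinner (x + y) (x + y) + cinner (x - y) (x - y) = 2 * cinner x x + 2 * cinner y y"
    by (simp add: cinner_add_left cinner_add_right cinner_diff_left cinner_diff_right)
  then have "complex_of_real ((norm (x + y))\<^sup>2 + (norm (x - y))\<^sup>2)
      = complex_of_real (2 * (norm x)\<^sup>2 + 2 * (norm y)\<^sup>2)"
    by (simp add: cinner_self_norm)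
  then show ?thesis
    by (simp only: of_real_eq_iff)
qed

lemma Cauchy_if_dist_power2_le:
  fixes X :: "nat \<Rightarrow> 'a::metric_space"
  assumes "\<And>m n. (dist (X m) (X n))\<^sup>2 \<le> a m + a n" and "a \<longlonglongrightarrow> 0"
  shows "Cauchy X"
proof (rule metric_CauchyI)
  fix e :: real assume "0 < e"
  then have "\<forall>\<^sub>F n in sequentially. a n < e\<^sup>2 / 2"
    using order_tendstoD(2)[OF assms(2), of "e\<^sup>2 / 2"] \<open>0 < e\<close> by simp
  then obtain N where N: "\<And>n. N \<le> n \<Longrightarrow> a n < e\<^sup>2 / 2"
    by (auto simp: eventually_sequentially)
  have "dist (X m) (X n) < e" if "N \<le> m" "N \<le> n" for m n
  proof -
    have "(dist (X m) (X n))\<^sup>2 < e\<^sup>2"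
      using assms(1)[of m n] N[OF that(1)] N[OF that(2)] by linarith
    then show ?thesis
      using \<open>0 < e\<close> by (simp add: power_less_imp_less_base)
  qed
  then show "\<exists>M. \<forall>m\<ge>M. \<forall>n\<ge>M. dist (X m) (X n) < e"
    by blast
qed

lemma min_norm_exists:
  fixes S :: "'a::complex_inner set"
  assumes "closed S" and "S \<noteq> {}" and midpoint: "\<And>x y. x \<in> S \<Longrightarrow> y \<in> S \<Longrightarrow> (1/2::real) *\<^sub>R (x + y) \<in> S"
  shows "\<exists>z\<in>S. \<forall>x\<in>S. norm z \<le> norm x"
proof -
  define d where "d = (INF x\<in>S. (norm x)\<^sup>2)"
  have bdd: "bdd_below ((\<lambda>x. (norm x)\<^sup>2) ` S)"
    by (rule bdd_belowI[of _ 0]) auto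
  have d_le: "d \<le> (norm x)\<^sup>2" if "x \<in> S" for x
    unfolding d_def using bdd that by (rule cINF_lower)
  have "\<exists>x\<in>S. (norm x)\<^sup>2 < d + inverse (real (Suc n))" for n
    using cInf_lessD[of "(\<lambda>x. (norm x)\<^sup>2) ` S" "d + inverse (real (Suc n))"] \<open>S \<noteq> {}\<close>
    by (auto simp: d_def)
  then obtain xs where xs: "\<And>n. xs n \<in> S" and xs_lt: "\<And>n. (norm (xs n))\<^sup>2 < d + inverse (real (Suc n))"
    by metis
  \<comment> \<open>the parallelogram law turns near-minimality into the Cauchy property\<close>
  have dist_xs: "(dist (xs m) (xs n))\<^sup>2 \<le> 2 * inverse (real (Suc m)) + 2 * inverse (real (Suc n))" for m n
  proof -
    have "d \<le> (norm ((1/2::real) *\<^sub>R (xs m + xs n)))\<^sup>2"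
      using d_le midpoint xs by blast
    then have "4 * d \<le> (norm (xs m + xs n))\<^sup>2"
      by (simp add: power2_eq_square)
    then show ?thesis
      using parallelogram_law[of "xs m" "xs n"] xs_lt[of m] xs_lt[of n] by (simp add: dist_norm)
  qed
  have "Cauchy xs"
    using dist_xs by (rule Cauchy_if_dist_power2_le) (intro tendsto_mult_right_zero LIMSEQ_inverse_real_of_nat)
  then obtain z where z: "xs \<longlonglongrightarrow> z"
    using Cauchy_convergent_iff convergent_def by blast
  have "z \<in> S"
    using \<open>closed S\<close> xs z by (rule closed_sequentially)
  moreover have "(norm z)\<^sup>2 \<le> d"
  proof (rule LIMSEQ_le)
    show "(\<lambda>n. (norm (xs n))\<^sup>2) \<longlonglongrightarrow> (norm z)\<^sup>2"
      by (intro tendsto_intros z)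
    show "(\<lambda>n. d + inverse (real (Suc n))) \<longlonglongrightarrow> d"
      by (rule LIMSEQ_inverse_real_of_nat_add)
    show "\<exists>N. \<forall>n\<ge>N. (norm (xs n))\<^sup>2 \<le> d + inverse (real (Suc n))"
      using xs_lt less_imp_le by blast
  qed
  ultimately show ?thesis
    using d_le by (meson norm_ge_zero order_trans power2_le_imp_le)
qed

section \<open>Riesz representation and adjoints\<close>

lemma cinner_eq_0_if_min_norm:
  assumes "\<And>t. norm z \<le> norm (z - t *\<^sub>C n)"
  shows "cinner n z = 0"
proof (cases "n = 0")
  case False
  have "(norm z)\<^sup>2 \<le> (norm (z - (cinner z n / complex_of_real ((norm n)\<^sup>2)) *\<^sub>C n))\<^sup>2"
    using assms by (intro power_mono) simp_all
  then have "(cmod (cinner z n))\<^sup>2 / (norm n)\<^sup>2 \<le> 0"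
    using norm_diff_projection[OF False, of z] by linarith
  then have "cinner z n = 0"
    using False by (simp add: divide_le_0_iff)
  then show ?thesis
    by (metis cinner_commute complex_cnj_zero)
qed simp

lemma riesz_representation:
  fixes \<phi> :: "'a::complex_inner \<Rightarrow> complex"
  assumes add: "\<And>x y. \<phi> (x + y) = \<phi> x + \<phi> y"
    and scale: "\<And>c x. \<phi> (c *\<^sub>C x) = c * \<phi> x"
    and bound: "\<And>x. cmod (\<phi> x) \<le> norm x * K"
  shows "\<exists>w. \<forall>y. \<phi> y = cinner y w"
proof (cases "\<forall>y. \<phi> y = 0")
  case True
  then show ?thesis by (intro exI[of _ 0]) simp
next
  case False
  have scaleR: "\<phi> (t *\<^sub>R x) = complex_of_real t * \<phi> x" for t x
    using scale[of "complex_of_real t" x] by (simp add: scaleC_of_real)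
  have diff: "\<phi> (x - y) = \<phi> x - \<phi> y" for x y
    using add[of "x - y" y] by simp
  have lin: "bounded_linear \<phi>"
    using add scaleR bound by (intro bounded_linear_intro[where K=K]) (simp_all add: scaleR_conv_of_real)
  define S where "S = {x. \<phi> x = 1}"
  have "closed S"
    unfolding S_def using lin by (intro closed_Collect_eq continuous_intros) (simp_all add: linear_continuous_on)
  moreover from False obtain x0 where "\<phi> x0 \<noteq> 0" by blast
  then have "(1 / \<phi> x0) *\<^sub>C x0 \<in> S" by (simp add: S_def scale)
  moreover have "(1/2::real) *\<^sub>R (x + y) \<in> S" if "x \<in> S" "y \<in> S" for x y
    using that by (simp add: S_def scaleR add)
  ultimately obtain z where "z \<in> S" and z_min: "\<And>x. x \<in> S \<Longrightarrow> norm z \<le> norm x"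
    using min_norm_exists[of S] by blast
  then have "\<phi> z = 1" by (simp add: S_def)
  have orth: "cinner n z = 0" if "\<phi> n = 0" for n
  proof (rule cinner_eq_0_if_min_norm)
    show "norm z \<le> norm (z - t *\<^sub>C n)" for t
      using \<open>\<phi> z = 1\<close> that by (intro z_min) (simp add: S_def diff scale)
  qed
  have "z \<noteq> 0"
    using \<open>\<phi> z = 1\<close> diff[of 0 0] by auto
  show ?thesis
  proof (intro exI allI)
    fix y
    have "\<phi> (y - \<phi> y *\<^sub>C z) = 0"
      by (simp only: diff scale \<open>\<phi> z = 1\<close>) simp
    then have "cinner (y - \<phi> y *\<^sub>C z) z = 0"
      by (rule orth)
    then have "cinner y z = \<phi> y * complex_of_real ((norm z)\<^sup>2)"
      by (simp add: cinner_diff_left cinner_scaleC_left cinner_self_norm)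
    then show "\<phi> y = cinner y (complex_of_real (1 / (norm z)\<^sup>2) *\<^sub>C z)"
      using \<open>z \<noteq> 0\<close> by (simp add: cinner_scaleC_right)
  qed
qed

lemma bounded_clinear_imp_bounded_linear:
  assumes "bounded_clinear T"
  shows "bounded_linear T"
proof -
  from assms obtain K where add: "\<And>x y. T (x + y) = T x + T y"
    and scale: "\<And>c x. T (c *\<^sub>C x) = c *\<^sub>C T x" and bound: "\<And>x. norm (T x) \<le> norm x * K"
    unfolding bounded_clinear_def by blast
  show ?thesis
  proof (rule bounded_linear_intro[OF add _ bound])
    show "T (t *\<^sub>R x) = t *\<^sub>R T x" for t x
      using scale[of "complex_of_real t" x] by (simp add: scaleC_of_real)
  qed
qed

lemma adjoint_exists:
  assumes "bounded_clinear T"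
  shows "\<exists>S. \<forall>x y. cinner (S x) y = cinner x (T y)"
proof -
  from assms have add: "\<And>x y. T (x + y) = T x + T y" and scale: "\<And>c x. T (c *\<^sub>C x) = c *\<^sub>C T x"
    unfolding bounded_clinear_def by blast+
  have T: "bounded_linear T"
    using assms by (rule bounded_clinear_imp_bounded_linear)
  have "\<exists>w. \<forall>y. cinner w y = cinner x (T y)" for x
  proof -
    have "\<exists>w. \<forall>y. cinner (T y) x = cinner y w"
    proof (rule riesz_representation[where \<phi>="\<lambda>y. cinner (T y) x"])
      show "cinner (T (y1 + y2)) x = cinner (T y1) x + cinner (T y2) x" for y1 y2
        by (simp only: add cinner_add_left)
      show "cinner (T (c *\<^sub>C y)) x = c * cinner (T y) x" for c y
        by (simp only: scale cinner_scaleC_left)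
      show "cmod (cinner (T y) x) \<le> norm y * (onorm T * norm x)" for y
      proof -
        have "cmod (cinner (T y) x) \<le> norm (T y) * norm x"
          by (rule cinner_Cauchy_Schwarz)
        also have "\<dots> \<le> (onorm T * norm y) * norm x"
          by (rule mult_right_mono[OF onorm[OF T] norm_ge_zero])
        finally show ?thesis
          by (simp only: mult_ac)
      qed
    qed
    then obtain w where w: "\<And>y. cinner (T y) x = cinner y w"
      by blast
    have "cinner w y = cinner x (T y)" for y
      by (simp add: cinner_commute[of w y] cinner_commute[of x "T y"] w)
    then show ?thesis
      by blast
  qed
  then show ?thesis
    using choice[of "\<lambda>x w. \<forall>y. cinner w y = cinner x (T y)"] by blast
qed

lemma cinner_adjoint_left:
  assumes "bounded_clinear T"
  shows "cinner (adjoint T x) y = cinner x (T y)"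
proof -
  obtain S where S: "\<And>x y. cinner (S x) y = cinner x (T y)"
    using adjoint_exists[OF assms] by blast
  have "S' = S" if "\<forall>x y. cinner (S' x) y = cinner x (T y)" for S'
  proof
    fix x
    have "cinner (S' x - S x) (S' x - S x) = 0"
      using that by (simp add: cinner_diff_left S)
    then show "S' x = S x" by simp
  qed
  then have "adjoint T = S"
    unfolding adjoint_def using S by (intro the_equality) auto
  then show ?thesis
    using S by simp
qed

lemma norm_adjoint_le:
  assumes "bounded_clinear T"
  shows "norm (adjoint T x) \<le> onorm T * norm x"
proof -
  have T: "bounded_linear T"
    using assms by (rule bounded_clinear_imp_bounded_linear)
  define v where "v = adjoint T x"
  have "complex_of_real ((norm v)\<^sup>2) = cinner x (T v)"
    using cinner_adjoint_left[OF assms, of x v] by (simp only: v_def[symmetric] cinner_self_norm)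
  then have "(norm v)\<^sup>2 = cmod (cinner x (T v))"
    by (metis abs_of_nonneg norm_of_real zero_le_power2)
  also have "\<dots> \<le> norm x * (onorm T * norm v)"
    using cinner_Cauchy_Schwarz[of x "T v"] onorm[OF T, of v] by (meson mult_left_mono norm_ge_zero order_trans)
  finally have "norm v * norm v \<le> (onorm T * norm x) * norm v"
    by (simp add: power2_eq_square mult_ac)
  then show ?thesis
    unfolding v_def[symmetric] using onorm_pos_le[OF T]
    by (cases "v = 0") (simp_all add: mult_le_cancel_right)
qed

lemma abs_onorm_diff_le:
  assumes "bounded_linear f" and "bounded_linear g"
  shows "\<bar>onorm f - onorm g\<bar> \<le> onorm (\<lambda>x. f x - g x)"
proof -
  have fg: "bounded_linear (\<lambda>x. f x - g x)" and gf: "bounded_linear (\<lambda>x. g x - f x)"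
    using assms by (simp_all add: bounded_linear_sub)
  have "onorm f \<le> onorm (\<lambda>x. f x - g x) + onorm g"
    using onorm_triangle[OF fg assms(2)] by simp
  moreover have "onorm g \<le> onorm (\<lambda>x. g x - f x) + onorm f"
    using onorm_triangle[OF gf assms(1)] by simp
  moreover have "onorm (\<lambda>x. g x - f x) = onorm (\<lambda>x. f x - g x)"
    using onorm_neg[of "\<lambda>x. f x - g x"] by simp
  ultimately show ?thesis
    by linarith
qed

lemma op_continuous_on_imp_continuous_on_onorm:
  assumes "op_continuous_on S \<Phi>" and "\<forall>z\<in>S. bounded_clinear (\<Phi> z)"
  shows "continuous_on S (\<lambda>z. onorm (\<Phi> z))"
  unfolding continuous_on_def
proof
  fix z assume "z \<in> S"
  have "\<forall>\<^sub>F w in at z within S. w \<in> S"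
    by (simp add: eventually_at_filter)
  then have "\<forall>\<^sub>F w in at z within S. norm (onorm (\<Phi> w) - onorm (\<Phi> z)) \<le> onorm (\<lambda>x. \<Phi> w x - \<Phi> z x)"
    by (rule eventually_mono)
      (use \<open>z \<in> S\<close> assms(2) in \<open>auto intro!: abs_onorm_diff_le bounded_clinear_imp_bounded_linear\<close>)
  moreover have "((\<lambda>w. onorm (\<lambda>x. \<Phi> w x - \<Phi> z x)) \<longlongrightarrow> 0) (at z within S)"
    using assms(1) \<open>z \<in> S\<close> unfolding op_continuous_on_def by blast
  ultimately have "((\<lambda>w. onorm (\<Phi> w) - onorm (\<Phi> z)) \<longlongrightarrow> 0) (at z within S)"
    by (rule Lim_null_comparison)
  then show "((\<lambda>w. onorm (\<Phi> w)) \<longlongrightarrow> onorm (\<Phi> z)) (at z within S)"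
    by (rule LIM_zero_cancel)
qed

lemma onorm_le_SUP_onorm:
  assumes "op_continuous_on S \<Phi>" and "compact S" and "\<forall>z\<in>S. bounded_clinear (\<Phi> z)" and "z \<in> S"
  shows "onorm (\<Phi> z) \<le> (SUP z\<in>S. onorm (\<Phi> z))"
proof (rule cSUP_upper[OF \<open>z \<in> S\<close>])
  show "bdd_above ((\<lambda>z. onorm (\<Phi> z)) ` S)"
    using assms(1-3) by (intro bounded_imp_bdd_above compact_imp_bounded compact_continuous_image
        op_continuous_on_imp_continuous_on_onorm)
qed

lemma norm_cinner_C_kernel_le:
  assumes "bounded_clinear (\<Phi> a)" and "bounded_clinear (\<Phi> b)"
    and "onorm (\<Phi> a) \<le> M" and "onorm (\<Phi> b) \<le> M"
    and "cmod a \<le> r" and "cmod b \<le> r" and "r < 1"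
  shows "cmod (cinner (C_kernel \<Phi> a b x) y) \<le> 2 * M / (1 - r\<^sup>2) * norm x * norm y"
proof -
  have "0 \<le> r"
    using assms(5) norm_ge_zero order_trans by blast
  then have "r\<^sup>2 < 1"
    using \<open>r < 1\<close> by (simp add: abs_square_less_1)
  have "cmod (a * cnj b) \<le> r\<^sup>2"
    using assms(5,6) \<open>0 \<le> r\<close> by (simp add: norm_mult power2_eq_square mult_mono)
  then have "1 - r\<^sup>2 \<le> cmod (1 - a * cnj b)"
    using norm_triangle_ineq2[of 1 "a * cnj b"] by simp
  then have inv: "cmod (inverse (1 - a * cnj b)) \<le> 1 / (1 - r\<^sup>2)"
    using \<open>r\<^sup>2 < 1\<close> by (simp add: norm_inverse le_imp_inverse_le divide_inverse)
  have "norm (\<Phi> a x) \<le> M * norm x"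
    using onorm[OF bounded_clinear_imp_bounded_linear[OF assms(1)]] assms(3)
    by (meson mult_right_mono norm_ge_zero order_trans)
  moreover have "norm (adjoint (\<Phi> b) x) \<le> M * norm x"
    using norm_adjoint_le[OF assms(2)] assms(4) by (meson mult_right_mono norm_ge_zero order_trans)
  ultimately have "norm (\<Phi> a x + adjoint (\<Phi> b) x) \<le> 2 * M * norm x"
    by (metis mult_2 mult.assoc norm_triangle_le add_mono)
  with inv have "norm (C_kernel \<Phi> a b x) \<le> 1 / (1 - r\<^sup>2) * (2 * M * norm x)"
    unfolding C_kernel_def norm_scaleC by (rule mult_mono) (use \<open>r\<^sup>2 < 1\<close> in simp_all)
  from mult_right_mono[OF this norm_ge_zero[of y]]
  have "norm (C_kernel \<Phi> a b x) * norm y \<le> 2 * M / (1 - r\<^sup>2) * norm x * norm y"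
    by simp
  then show ?thesis
    using cinner_Cauchy_Schwarz order_trans by blast
qed

section \<open>Trigonometric polynomials\<close>

lemma has_integral_cis_int:
  fixes k :: int
  shows "((\<lambda>\<theta>. cis (of_int k * \<theta>)) has_integral (if k = 0 then complex_of_real (2*pi) else 0)) {0..2*pi}"
proof (cases "k = 0")
  case True
  then show ?thesis
    using has_integral_const_real[of "1::complex" 0 "2*pi"] by (simp add: scaleR_conv_of_real)
next
  case False
  define G where "G = (\<lambda>x::real. exp (\<i> * of_int k * of_real x) / (\<i> * of_int k))"
  have "(G has_vector_derivative cis (of_int k * x)) (at x within {0..2*pi})" for x
  proof -
    have "((\<lambda>z. exp (\<i> * of_int k * z) / (\<i> * of_int k)) has_field_derivative exp (\<i> * of_int k * of_real x)) (at (of_real x))"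
      using False by (auto intro!: derivative_eq_intros)
    from has_vector_derivative_real_field[OF this] show ?thesis
      unfolding G_def cis_conv_exp by (simp add: mult.assoc)
  qed
  then have "((\<lambda>\<theta>. cis (of_int k * \<theta>)) has_integral G (2*pi) - G 0) {0..2*pi}"
    by (intro fundamental_theorem_of_calculus) auto
  moreover have "G (2*pi) = G 0"
  proof -
    have "exp (\<i> * of_int k * of_real (2*pi)) = cis (2 * pi * of_int k)"
      by (simp add: cis_conv_exp mult_ac)
    also have "\<dots> = 1"
      by (simp add: cis.ctr cos_int_2pin sin_int_2pin complex_eq_iff)
    finally show ?thesis
      by (simp add: G_def)
  qed
  ultimately show ?thesis
    using False by simp
qed

lemma inverse_cis_power:
  "(inverse (complex_of_real r * cis \<theta>)) ^ n = complex_of_real ((inverse r) ^ n) * cis (real n * (- \<theta>))"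
  by (simp only: inverse_mult_distrib cis_inverse power_mult_distrib of_real_power of_real_inverse)
    (simp add: Complex.DeMoivre)

lemma inverse_cis_power_mult_cnj:
  "(inverse (complex_of_real r * cis \<theta>)) ^ u * cnj ((inverse (complex_of_real r * cis \<theta>)) ^ v)
     = complex_of_real ((1/r) ^ (u + v)) * cis (of_int (int v - int u) * \<theta>)"
proof -
  have "cnj ((inverse (complex_of_real r * cis \<theta>)) ^ v) = complex_of_real ((inverse r) ^ v) * cis (real v * \<theta>)"
    unfolding inverse_cis_power complex_cnj_mult complex_cnj_complex_of_real cis_cnj by simp
  then have "(inverse (complex_of_real r * cis \<theta>)) ^ u * cnj ((inverse (complex_of_real r * cis \<theta>)) ^ v)
      = (complex_of_real ((inverse r) ^ u) * complex_of_real ((inverse r) ^ v))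
        * (cis (real u * (- \<theta>)) * cis (real v * \<theta>))"
    unfolding inverse_cis_power by (simp only: mult_ac)
  also have "cis (real u * (- \<theta>)) * cis (real v * \<theta>) = cis (of_int (int v - int u) * \<theta>)"
    unfolding cis_mult by (simp add: algebra_simps)
  also have "complex_of_real ((inverse r) ^ u) * complex_of_real ((inverse r) ^ v) = complex_of_real ((1/r) ^ (u + v))"
    by (simp add: power_add divide_inverse)
  finally show ?thesis .
qed

lemma cinner_inverse_cis_sum:
  "cinner (\<Sum>u\<in>U. (inverse (complex_of_real r * cis \<theta>)) ^ u *\<^sub>C c u)
          (\<Sum>u\<in>U. (inverse (complex_of_real r * cis \<theta>)) ^ u *\<^sub>C c u)
     = (\<Sum>u\<in>U. \<Sum>v\<in>U. complex_of_real ((1/r) ^ (u + v)) * cinner (c u) (c v)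
                           * cis (of_int (int v - int u) * \<theta>))"
proof -
  have "cinner (\<Sum>u\<in>U. (inverse (complex_of_real r * cis \<theta>)) ^ u *\<^sub>C c u)
               (\<Sum>u\<in>U. (inverse (complex_of_real r * cis \<theta>)) ^ u *\<^sub>C c u)
      = (\<Sum>u\<in>U. \<Sum>v\<in>U. ((inverse (complex_of_real r * cis \<theta>)) ^ u
                               * cnj ((inverse (complex_of_real r * cis \<theta>)) ^ v)) * cinner (c u) (c v))"
    by (simp only: cinner_sum_left cinner_scaleC_left cinner_sum_right cinner_scaleC_right
        sum_distrib_left mult.assoc mult.left_commute) (rule sum.swap)
  then show ?thesis
    unfolding inverse_cis_power_mult_cnj by (simp only: mult_ac)
qed

lemma parseval_partial_sum:
  fixes c :: "nat \<Rightarrow> 'a::complex_inner"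
  shows "((\<lambda>\<theta>. (norm (\<Sum>u\<in>{1..N}. (inverse (complex_of_real r * cis \<theta>)) ^ u *\<^sub>C c u))\<^sup>2)
          has_integral 2 * pi * (\<Sum>u\<in>{1..N}. (1/r) ^ (2*u) * (norm (c u))\<^sup>2)) {0..2*pi}"
proof -
  define U where "U = {1..N}"
  define a where "a = (\<lambda>u v. complex_of_real ((1/r) ^ (u + v)) * cinner (c u) (c v))"
  \<comment> \<open>orthogonality of the characters: only the diagonal u = v survives\<close>
  have "((\<lambda>\<theta>. \<Sum>u\<in>U. \<Sum>v\<in>U. a u v * cis (of_int (int v - int u) * \<theta>)) has_integral
        (\<Sum>u\<in>U. \<Sum>v\<in>U. a u v * (if int v - int u = 0 then complex_of_real (2*pi) else 0))) {0..2*pi}"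
    by (intro has_integral_sum finite_atLeastAtMost has_integral_mult_right has_integral_cis_int)
      (simp_all add: U_def)
  moreover have "(\<Sum>u\<in>U. \<Sum>v\<in>U. a u v * (if int v - int u = 0 then complex_of_real (2*pi) else 0))
      = (\<Sum>u\<in>U. \<Sum>v\<in>U. if v = u then a u v * complex_of_real (2*pi) else 0)"
    by (intro sum.cong refl) simp
  moreover have "\<dots> = (\<Sum>u\<in>U. complex_of_real (2 * pi * ((1/r) ^ (2*u) * (norm (c u))\<^sup>2)))"
    by (simp add: U_def a_def cinner_self_norm mult_ac power_add power_mult power2_eq_square)
  ultimately have "((\<lambda>\<theta>. cinner (\<Sum>u\<in>U. (inverse (complex_of_real r * cis \<theta>)) ^ u *\<^sub>C c u)
                       (\<Sum>u\<in>U. (inverse (complex_of_real r * cis \<theta>)) ^ u *\<^sub>C c u))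
      has_integral complex_of_real (2 * pi * (\<Sum>u\<in>U. (1/r) ^ (2*u) * (norm (c u))\<^sup>2))) {0..2*pi}"
    unfolding cinner_inverse_cis_sum a_def by (simp add: sum_distrib_left)
  from has_integral_Re[OF this] show ?thesis
    by (simp add: U_def cinner_self_norm)
qed

lemma continuous_on_scaleC_left:
  fixes v :: "'a::complex_inner"
  assumes "continuous_on A w"
  shows "continuous_on A (\<lambda>t. w t *\<^sub>C v)"
proof -
  have decomp: "z *\<^sub>C v = Re z *\<^sub>R v + Im z *\<^sub>R (\<i> *\<^sub>C v)" for z
  proof -
    have "z = complex_of_real (Re z) + complex_of_real (Im z) * \<i>"
      by (simp add: complex_eq_iff)
    then have "z *\<^sub>C v = complex_of_real (Re z) *\<^sub>C v + (complex_of_real (Im z) * \<i>) *\<^sub>C v"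
      by (metis scaleC_add_left)
    then show ?thesis
      by (simp only: scaleC_scaleC[symmetric] scaleC_of_real)
  qed
  have "continuous_on A (\<lambda>t. Re (w t) *\<^sub>R v + Im (w t) *\<^sub>R (\<i> *\<^sub>C v))"
    by (intro continuous_intros assms)
  then show ?thesis
    by (simp only: decomp[symmetric])
qed

lemma continuous_on_partial_sum:
  fixes c :: "nat \<Rightarrow> 'a::complex_inner"
  shows "continuous_on A (\<lambda>\<theta>. \<Sum>u\<in>{1..N}. (inverse (complex_of_real r * cis \<theta>)) ^ u *\<^sub>C c u)"
proof (intro continuous_on_sum continuous_on_scaleC_left)
  show "continuous_on A (\<lambda>\<theta>. (inverse (complex_of_real r * cis \<theta>)) ^ u)" for u
    unfolding inverse_cis_power unfolding cis_conv_exp by (intro continuous_intros)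
qed

section \<open>Measurability and square integrals\<close>

lemma borel_measurable_continuous_on_restrict_lborel:
  assumes "continuous_on A f"
  shows "f \<in> borel_measurable (restrict_space lborel A)"
  unfolding measurable_cong_sets[OF sets_restrict_space_cong[OF sets_lborel] refl]
  by (rule borel_measurable_continuous_on_restrict[OF assms])

lemma LIMSEQ_floor_mult_div:
  fixes x :: real
  shows "(\<lambda>m. of_int \<lfloor>real (Suc m) * x\<rfloor> / real (Suc m)) \<longlonglongrightarrow> x"
proof -
  have "(\<lambda>m. of_int \<lfloor>real (Suc m) * x\<rfloor> / real (Suc m) - x) \<longlonglongrightarrow> 0"
  proof (rule Lim_null_comparison)
    show "\<forall>\<^sub>F m in sequentially. norm (of_int \<lfloor>real (Suc m) * x\<rfloor> / real (Suc m) - x) \<le> inverse (real (Suc m))"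
    proof (rule always_eventually, rule allI)
      fix m
      define k where "k = real (Suc m)"
      have k: "k > 0" by (simp add: k_def)
      have 1: "of_int \<lfloor>k * x\<rfloor> \<le> k * x" by (rule of_int_floor_le)
      have 2: "k * x < of_int \<lfloor>k * x\<rfloor> + 1" by (rule real_of_int_floor_add_one_gt)
      have eq: "of_int \<lfloor>k * x\<rfloor> / k - x = (of_int \<lfloor>k * x\<rfloor> - k * x) / k"
        using k by (simp add: field_simps)
      have "\<bar>of_int \<lfloor>k * x\<rfloor> - k * x\<bar> \<le> 1" using 1 2 by linarith
      then have le: "\<bar>of_int \<lfloor>k * x\<rfloor> - k * x\<bar> / k \<le> 1 / k"
        using k by (simp add: divide_right_mono)
      have n: "norm (of_int \<lfloor>k * x\<rfloor> / k - x) = \<bar>of_int \<lfloor>k * x\<rfloor> - k * x\<bar> / k"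
        unfolding eq real_norm_def abs_divide using k by simp
      have "norm (of_int \<lfloor>k * x\<rfloor> / k - x) \<le> inverse k"
        using n le by (simp add: inverse_eq_divide)
      then show "norm (of_int \<lfloor>real (Suc m) * x\<rfloor> / real (Suc m) - x) \<le> inverse (real (Suc m))"
        unfolding k_def .
    qed
    show "(\<lambda>m. inverse (real (Suc m))) \<longlonglongrightarrow> 0" by (rule LIMSEQ_inverse_real_of_nat)
  qed
  then show ?thesis by (rule LIM_zero_cancel)
qed

text \<open>
  The target space need not be second countable, so \<open>f - s\<close> itself need not be Borel
  measurable; its norm is, as a limit of \<open>norm (f x - c)\<close> for step approximations of \<open>s\<close>
  that take only countably many values \<open>c\<close>.
\<close>
lemma borel_measurable_norm_diff_continuous:
  fixes f s :: "real \<Rightarrow> 'a::real_normed_vector"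
  assumes f: "f \<in> borel_measurable (restrict_space lborel {a..b})"
    and s: "continuous_on {a..b} s" and ab: "a \<le> b"
  shows "(\<lambda>x. norm (f x - s x)) \<in> borel_measurable (restrict_space lborel {a..b})"
proof -
  define M where "M = restrict_space lborel {a..b}"
  define cl where "cl = (\<lambda>q::real. max a (min b q))"
  define u where "u = (\<lambda>(m::nat) x. norm (f x - s (cl (of_int \<lfloor>real (Suc m) * x\<rfloor> / real (Suc m)))))"
  have fM: "f \<in> borel_measurable M" using f by (simp add: M_def)
  have um: "u m \<in> borel_measurable M" for m
  proof -
    have "(\<lambda>x. (\<lambda>i::int. \<lambda>x. norm (f x - s (cl (of_int i / real (Suc m))))) \<lfloor>real (Suc m) * x\<rfloor> x) \<in> borel_measurable M"
    proof (rule measurable_compose_countable[where f="\<lambda>i x. norm (f x - s (cl (of_int i / real (Suc m))))" and g="\<lambda>x. \<lfloor>real (Suc m) * x\<rfloor>"])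
      fix i :: int
      have "(\<lambda>y. norm (y - s (cl (of_int i / real (Suc m))))) \<in> borel_measurable borel"
        by (intro borel_measurable_continuous_onI continuous_intros)
      then show "(\<lambda>x. norm (f x - s (cl (of_int i / real (Suc m))))) \<in> borel_measurable M"
        using measurable_compose[OF fM] by blast
    next
      have "(\<lambda>x. real (Suc m) * x) \<in> borel_measurable borel"
        by (intro borel_measurable_continuous_onI continuous_intros)
      then have "(\<lambda>x. real (Suc m) * x) \<in> borel_measurable M"
        unfolding M_def by (intro measurable_restrict_space1) simp
      then show "(\<lambda>x. \<lfloor>real (Suc m) * x\<rfloor>) \<in> M \<rightarrow>\<^sub>M count_space UNIV"
        using measurable_compose[OF _ measurable_real_floor] by blast
    qed
    then show ?thesis by (simp add: u_def)
  qed
  have conv: "(\<lambda>m. u m x) \<longlonglongrightarrow> norm (f x - s x)" if x: "x \<in> space M" for x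
  proof -
    have xab: "x \<in> {a..b}" using x by (simp add: M_def)
    have clt: "(\<lambda>m. cl (of_int \<lfloor>real (Suc m) * x\<rfloor> / real (Suc m))) \<longlonglongrightarrow> cl x"
      unfolding cl_def by (intro tendsto_intros LIMSEQ_floor_mult_div)
    have clx: "cl x = x" using xab by (simp add: cl_def)
    have clin: "cl q \<in> {a..b}" for q using ab by (simp add: cl_def)
    have "(\<lambda>m. s (cl (of_int \<lfloor>real (Suc m) * x\<rfloor> / real (Suc m)))) \<longlonglongrightarrow> s x"
      by (rule continuous_on_tendsto_compose[OF s clt[unfolded clx] xab]) (rule always_eventually, use clin in blast)
    then show ?thesis unfolding u_def by (intro tendsto_intros)
  qed
  have "(\<lambda>x. norm (f x - s x)) \<in> borel_measurable M"
    by (rule borel_measurable_LIMSEQ_real[OF conv um])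
  then show ?thesis by (simp add: M_def)
qed

lemma power2_le_weighted_sum:
  fixes a b c e :: real
  assumes "0 \<le> a" and "a \<le> b + c" and "0 \<le> b" and "0 \<le> c" and "e > 0"
  shows "a\<^sup>2 \<le> (1 + e) * b\<^sup>2 + (1 + 1/e) * c\<^sup>2"
proof -
  have "a\<^sup>2 \<le> (b + c)\<^sup>2"
    using assms by (simp add: power_mono)
  also have "\<dots> = (1 + e) * b\<^sup>2 + (1 + 1/e) * c\<^sup>2 - (e * b - c)\<^sup>2 / e"
    using assms by (simp add: field_simps power2_eq_square)
  also have "\<dots> \<le> (1 + e) * b\<^sup>2 + (1 + 1/e) * c\<^sup>2"
    using assms by simp
  finally show ?thesis .
qed

lemma nn_integral_square_le_weighted:
  fixes f s d :: "'b \<Rightarrow> real"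
  assumes [measurable]: "s \<in> borel_measurable M" "d \<in> borel_measurable M"
    and nonneg: "\<And>x. 0 \<le> f x" "\<And>x. 0 \<le> s x" "\<And>x. 0 \<le> d x"
    and triangle: "\<And>x. f x \<le> s x + d x" and "e > 0"
  shows "(\<integral>\<^sup>+x. ennreal ((f x)\<^sup>2) \<partial>M)
           \<le> ennreal (1 + e) * (\<integral>\<^sup>+x. ennreal ((s x)\<^sup>2) \<partial>M) + ennreal (1 + 1/e) * (\<integral>\<^sup>+x. ennreal ((d x)\<^sup>2) \<partial>M)"
proof -
  define \<alpha> \<beta> where "\<alpha> = ennreal (1 + e)" and "\<beta> = ennreal (1 + 1/e)"
  have "(\<integral>\<^sup>+x. ennreal ((f x)\<^sup>2) \<partial>M) \<le> (\<integral>\<^sup>+x. \<alpha> * ennreal ((s x)\<^sup>2) + \<beta> * ennreal ((d x)\<^sup>2) \<partial>M)"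
  proof (rule nn_integral_mono)
    fix x
    have "ennreal ((f x)\<^sup>2) \<le> ennreal ((1 + e) * (s x)\<^sup>2 + (1 + 1/e) * (d x)\<^sup>2)"
      using power2_le_weighted_sum[OF nonneg(1) triangle nonneg(2,3) \<open>e > 0\<close>] by (rule ennreal_leI)
    also have "\<dots> = \<alpha> * ennreal ((s x)\<^sup>2) + \<beta> * ennreal ((d x)\<^sup>2)"
      unfolding \<alpha>_def \<beta>_def using \<open>e > 0\<close>
      by (simp only: ennreal_plus ennreal_mult zero_le_mult_iff zero_le_power2 add_nonneg_nonneg
          divide_nonneg_pos less_imp_le zero_le_one zero_less_one order_refl simp_thms)
    finally show "ennreal ((f x)\<^sup>2) \<le> \<alpha> * ennreal ((s x)\<^sup>2) + \<beta> * ennreal ((d x)\<^sup>2)" .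
  qed
  also have "\<dots> = (\<integral>\<^sup>+x. \<alpha> * ennreal ((s x)\<^sup>2) \<partial>M) + (\<integral>\<^sup>+x. \<beta> * ennreal ((d x)\<^sup>2) \<partial>M)"
    by (rule nn_integral_add) measurable
  also have "\<dots> = \<alpha> * (\<integral>\<^sup>+x. ennreal ((s x)\<^sup>2) \<partial>M) + \<beta> * (\<integral>\<^sup>+x. ennreal ((d x)\<^sup>2) \<partial>M)"
    by (intro arg_cong2[where f="(+)"] nn_integral_cmult) measurable
  finally show ?thesis
    by (simp only: \<alpha>_def \<beta>_def)
qed

lemma ennreal_le_if_le_mult:
  assumes "\<And>e. e > 0 \<Longrightarrow> x \<le> ennreal ((1 + e) * c)" and "0 \<le> c"
  shows "x \<le> ennreal c"
proof (rule ennreal_le_epsilon)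
  fix d :: real assume "0 < d"
  define e where "e = d / (c + 1)"
  have "e > 0" and "e * c \<le> d"
    using \<open>0 < d\<close> \<open>0 \<le> c\<close> by (auto simp: e_def field_simps)
  have "x \<le> ennreal ((1 + e) * c)"
    using assms(1)[OF \<open>e > 0\<close>] .
  also have "\<dots> \<le> ennreal (c + d)"
    using \<open>e * c \<le> d\<close> by (intro ennreal_leI) (simp add: algebra_simps)
  also have "\<dots> = ennreal c + ennreal d"
    using \<open>0 \<le> c\<close> \<open>0 < d\<close> by (simp add: ennreal_plus)
  finally show "x \<le> ennreal c + ennreal d" .
qed

lemma nn_integral_square_le_of_approx:
  fixes f :: "'b \<Rightarrow> real" and s d :: "nat \<Rightarrow> 'b \<Rightarrow> real"
  assumes "\<And>N. s N \<in> borel_measurable M" and "\<And>N. d N \<in> borel_measurable M"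
    and "\<And>x. 0 \<le> f x" and "\<And>N x. 0 \<le> s N x" and "\<And>N x. 0 \<le> d N x"
    and "\<And>N x. f x \<le> s N x + d N x"
    and bound: "\<And>N. (\<integral>\<^sup>+x. ennreal ((s N x)\<^sup>2) \<partial>M) \<le> ennreal c" and "0 \<le> c"
    and approx: "(\<lambda>N. \<integral>\<^sup>+x. ennreal ((d N x)\<^sup>2) \<partial>M) \<longlonglongrightarrow> 0"
  shows "(\<integral>\<^sup>+x. ennreal ((f x)\<^sup>2) \<partial>M) \<le> ennreal c"
proof (rule ennreal_le_if_le_mult[OF _ \<open>0 \<le> c\<close>])
  fix e :: real assume "e > 0"
  define E where "E = (\<lambda>N. \<integral>\<^sup>+x. ennreal ((d N x)\<^sup>2) \<partial>M)"
  show "(\<integral>\<^sup>+x. ennreal ((f x)\<^sup>2) \<partial>M) \<le> ennreal ((1 + e) * c)"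
  proof (rule LIMSEQ_le_const)
    have "(\<lambda>N. ennreal (1 + e) * ennreal c + ennreal (1 + 1/e) * E N)
            \<longlonglongrightarrow> ennreal (1 + e) * ennreal c + ennreal (1 + 1/e) * 0"
      using approx unfolding E_def by (intro tendsto_add tendsto_const ennreal_tendsto_cmult) simp_all
    then show "(\<lambda>N. ennreal (1 + e) * ennreal c + ennreal (1 + 1/e) * E N) \<longlonglongrightarrow> ennreal ((1 + e) * c)"
      using \<open>e > 0\<close> \<open>0 \<le> c\<close> by (simp add: ennreal_mult)
    have "(\<integral>\<^sup>+x. ennreal ((f x)\<^sup>2) \<partial>M) \<le> ennreal (1 + e) * ennreal c + ennreal (1 + 1/e) * E N" for N
      using nn_integral_square_le_weighted[of "s N" M "d N" f e] assms \<open>e > 0\<close> unfolding E_def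
      by (meson add_mono mult_left_mono order_refl order_trans zero_le)
    then show "\<exists>N0. \<forall>N\<ge>N0. (\<integral>\<^sup>+x. ennreal ((f x)\<^sup>2) \<partial>M)
                 \<le> ennreal (1 + e) * ennreal c + ennreal (1 + 1/e) * E N"
      by blast
  qed
qed

lemma nn_integral_square_le:
  assumes [measurable]: "f \<in> borel_measurable M"
  shows "(\<integral>\<^sup>+x. f x \<partial>M)\<^sup>2 \<le> emeasure M (space M) * (\<integral>\<^sup>+x. (f x)\<^sup>2 \<partial>M)"
  using Cauchy_Schwarz_nn_integral[of f M "\<lambda>_. 1"] by (simp add: mult.commute)

lemma ennreal_le_if_power2_le:
  fixes x :: ennreal
  assumes "x\<^sup>2 \<le> ennreal (a\<^sup>2)" and "0 \<le> a"
  shows "x \<le> ennreal a"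
proof (cases x)
  case (real y)
  then have "y\<^sup>2 \<le> a\<^sup>2"
    using assms(1) by (simp add: ennreal_power)
  then have "y \<le> a"
    using \<open>0 \<le> a\<close> by (rule power2_le_imp_le)
  then show ?thesis
    using real by simp
next
  case top
  then have "x\<^sup>2 = top"
    by (simp add: power2_eq_square)
  with assms(1) show ?thesis
    by (simp add: top_unique)
qed

lemma has_integral_of_nn_integral:
  fixes f :: "real \<Rightarrow> real"
  assumes "A \<in> sets borel" and f: "f \<in> borel_measurable (restrict_space lborel A)"
    and nonneg: "\<And>x. 0 \<le> f x"
    and "(\<integral>\<^sup>+x. ennreal (f x) \<partial>(restrict_space lborel A)) = ennreal v" and "0 \<le> v"
  shows "(f has_integral v) A"
proof -
  have A: "A \<inter> space lborel \<in> sets lborel"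
    using assms(1) by simp
  define h where "h = (\<lambda>x. indicator A x * f x)"
  have "(\<lambda>x. indicator A x *\<^sub>R f x) \<in> borel_measurable lborel"
    using f borel_measurable_restrict_space_iff[OF A] by blast
  then have h_meas: "h \<in> borel_measurable borel"
    by (simp add: h_def measurable_lborel2)
  have "(\<integral>\<^sup>+x. ennreal (h x) \<partial>lborel) = (\<integral>\<^sup>+x. ennreal (f x) * indicator A x \<partial>lborel)"
    by (intro nn_integral_cong) (simp add: h_def indicator_def)
  then have "(\<integral>\<^sup>+x. ennreal (h x) \<partial>lborel) = ennreal v"
    using assms(4) nn_integral_restrict_space[OF A, of "\<lambda>x. ennreal (f x)"] by simp
  then have "(h has_integral v) UNIV"
    using h_meas nonneg \<open>0 \<le> v\<close> by (intro nn_integral_has_integral) (simp_all add: h_def)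
  moreover have "h = (\<lambda>x. if x \<in> A then f x else 0)"
    by (simp add: h_def fun_eq_iff)
  ultimately show ?thesis
    by (simp add: has_integral_restrict_UNIV)
qed

lemma nn_integral_partial_sum_le:
  fixes c :: "nat \<Rightarrow> 'a::complex_inner"
  assumes "in_H2minus r c"
  shows "(\<integral>\<^sup>+\<theta>. ennreal ((norm (\<Sum>u\<in>{1..N}. (inverse (complex_of_real r * cis \<theta>)) ^ u *\<^sub>C c u))\<^sup>2)
            \<partial>restrict_space lborel {0..2*pi})
           \<le> ennreal (2 * pi * (\<Sum>u. (1/r) ^ (2 * Suc u) * (norm (c (Suc u)))\<^sup>2))"
proof -
  have "{0..2*pi} \<inter> space lborel \<in> sets lborel"
    by simp
  from nn_integral_restrict_space[OF this] nn_integral_has_integral_lebesgue'[OF _ parseval_partial_sum]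
  have "(\<integral>\<^sup>+\<theta>. ennreal ((norm (\<Sum>u\<in>{1..N}. (inverse (complex_of_real r * cis \<theta>)) ^ u *\<^sub>C c u))\<^sup>2)
            \<partial>restrict_space lborel {0..2*pi})
      = ennreal (2 * pi * (\<Sum>u\<in>{1..N}. (1/r) ^ (2*u) * (norm (c u))\<^sup>2))"
    by simp
  also have "(\<Sum>u\<in>{1..N}. (1/r) ^ (2*u) * (norm (c u))\<^sup>2) = (\<Sum>u<N. (1/r) ^ (2 * Suc u) * (norm (c (Suc u)))\<^sup>2)"
    using sum.atLeast1_atMost_eq[of "\<lambda>u. (1/r) ^ (2*u) * (norm (c u))\<^sup>2" N] by simp
  also have "\<dots> \<le> (\<Sum>u. (1/r) ^ (2 * Suc u) * (norm (c (Suc u)))\<^sup>2)"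
    using assms unfolding in_H2minus_def by (intro sum_le_suminf) auto
  finally show ?thesis
    by (simp add: ennreal_leI)
qed

lemma nn_integral_circle_L2_sum_le:
  fixes c :: "nat \<Rightarrow> 'a::complex_inner"
  assumes "in_H2minus r c" and "circle_L2_sum r c F"
  shows "(\<integral>\<^sup>+\<theta>. ennreal ((norm (F (complex_of_real r * cis \<theta>)))\<^sup>2) \<partial>restrict_space lborel {0..2*pi})
           \<le> ennreal (2 * pi * (\<Sum>u. (1/r) ^ (2 * Suc u) * (norm (c (Suc u)))\<^sup>2))"
proof -
  define M where "M = restrict_space lborel {0..2*pi}"
  define Ft where "Ft = (\<lambda>\<theta>. F (complex_of_real r * cis \<theta>))"
  define S where "S = (\<lambda>N \<theta>. \<Sum>u\<in>{1..N}. (inverse (complex_of_real r * cis \<theta>)) ^ u *\<^sub>C c u)"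
  define Sf where "Sf = (\<Sum>u. (1/r) ^ (2 * Suc u) * (norm (c (Suc u)))\<^sup>2)"
  have summable: "summable (\<lambda>u. (1/r) ^ (2 * Suc u) * (norm (c (Suc u)))\<^sup>2)"
    using assms(1) by (simp add: in_H2minus_def)
  have Ft_meas: "Ft \<in> borel_measurable M"
    using assms(2) by (simp add: circle_L2_sum_def M_def Ft_def)
  have S_cont: "continuous_on {0..2*pi} (S N)" for N
    unfolding S_def by (rule continuous_on_partial_sum)
  have "(\<integral>\<^sup>+\<theta>. ennreal ((norm (Ft \<theta>))\<^sup>2) \<partial>M) \<le> ennreal (2 * pi * Sf)"
  proof (rule nn_integral_square_le_of_approx)
    show "(\<lambda>\<theta>. norm (S N \<theta>)) \<in> borel_measurable M" for N
      unfolding M_def by (intro borel_measurable_continuous_on_restrict_lborel continuous_on_norm S_cont)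
    show "(\<lambda>\<theta>. norm (Ft \<theta> - S N \<theta>)) \<in> borel_measurable M" for N
      using borel_measurable_norm_diff_continuous[OF Ft_meas[unfolded M_def] S_cont] by (simp add: M_def)
    show "norm (Ft \<theta>) \<le> norm (S N \<theta>) + norm (Ft \<theta> - S N \<theta>)" for N \<theta>
      using norm_triangle_ineq[of "S N \<theta>" "Ft \<theta> - S N \<theta>"] by simp
    show "(\<integral>\<^sup>+\<theta>. ennreal ((norm (S N \<theta>))\<^sup>2) \<partial>M) \<le> ennreal (2 * pi * Sf)" for N
      unfolding M_def S_def Sf_def using assms(1) by (rule nn_integral_partial_sum_le)
    show "0 \<le> 2 * pi * Sf"
      unfolding Sf_def using summable by (simp add: suminf_nonneg)
    show "(\<lambda>N. \<integral>\<^sup>+\<theta>. ennreal ((norm (Ft \<theta> - S N \<theta>))\<^sup>2) \<partial>M) \<longlonglongrightarrow> 0"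
      using assms(2) unfolding circle_L2_sum_def
      by (simp add: M_def Ft_def S_def nn_integral_restrict_space)
  qed simp_all
  then show ?thesis
    by (simp add: M_def Ft_def Sf_def)
qed

lemma has_integral_norm_circle_le:
  fixes c :: "nat \<Rightarrow> 'a::complex_inner"
  assumes "in_H2minus r c" and "circle_L2_sum r c F"
  obtains J where "((\<lambda>\<theta>. norm (F (complex_of_real r * cis \<theta>))) has_integral J) {0..2*pi}"
    and "J \<le> 2 * pi * sqrt (\<Sum>u. (1/r) ^ (2 * Suc u) * (norm (c (Suc u)))\<^sup>2)"
proof -
  define M where "M = restrict_space lborel {0..2*pi}"
  define f where "f = (\<lambda>\<theta>. norm (F (complex_of_real r * cis \<theta>)))"
  define Sf where "Sf = (\<Sum>u. (1/r) ^ (2 * Suc u) * (norm (c (Suc u)))\<^sup>2)"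
  have "0 \<le> Sf"
    using assms(1) unfolding Sf_def in_H2minus_def by (simp add: suminf_nonneg)
  have "(\<lambda>\<theta>. F (complex_of_real r * cis \<theta>)) \<in> borel_measurable M"
    using assms(2) by (simp add: circle_L2_sum_def M_def)
  from measurable_compose[OF this borel_measurable_norm]
  have f_meas: "f \<in> borel_measurable M"
    by (simp add: f_def)
  have "emeasure M (space M) = ennreal (2 * pi)"
    by (simp add: M_def emeasure_restrict_space space_restrict_space)
  then have "(\<integral>\<^sup>+\<theta>. ennreal (f \<theta>) \<partial>M)\<^sup>2 \<le> ennreal (2 * pi) * (\<integral>\<^sup>+\<theta>. ennreal ((f \<theta>)\<^sup>2) \<partial>M)"
    using nn_integral_square_le[of "\<lambda>\<theta>. ennreal (f \<theta>)" M] f_meas by (simp add: ennreal_power f_def)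
  also have "\<dots> \<le> ennreal (2 * pi) * ennreal (2 * pi * Sf)"
    using nn_integral_circle_L2_sum_le[OF assms] by (intro mult_left_mono) (simp_all add: M_def f_def Sf_def)
  also have "\<dots> = ennreal ((2 * pi * sqrt Sf)\<^sup>2)"
  proof -
    have "(2 * pi * sqrt Sf)\<^sup>2 = 2 * pi * (2 * pi * Sf)"
      using \<open>0 \<le> Sf\<close> by (simp add: power_mult_distrib power2_eq_square)
    then show ?thesis
      using \<open>0 \<le> Sf\<close> by (simp only: ennreal_mult[symmetric] pi_ge_zero mult_nonneg_nonneg zero_le_numeral)
  qed
  finally have le: "(\<integral>\<^sup>+\<theta>. ennreal (f \<theta>) \<partial>M) \<le> ennreal (2 * pi * sqrt Sf)"
    by (rule ennreal_le_if_power2_le) (simp add: \<open>0 \<le> Sf\<close>)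
  then have "(\<integral>\<^sup>+\<theta>. ennreal (f \<theta>) \<partial>M) \<noteq> top"
    by (auto simp: top_unique)
  then obtain J where J: "(\<integral>\<^sup>+\<theta>. ennreal (f \<theta>) \<partial>M) = ennreal J" and "0 \<le> J"
    using ennreal_cases[of "\<integral>\<^sup>+\<theta>. ennreal (f \<theta>) \<partial>M"] by auto
  have "J \<le> 2 * pi * sqrt Sf"
    using le \<open>0 \<le> Sf\<close> unfolding J by (simp add: ennreal_le_iff)
  have J_int: "(f has_integral J) {0..2*pi}"
    using f_meas J \<open>0 \<le> J\<close> unfolding M_def by (intro has_integral_of_nn_integral) (simp_all add: f_def)
  from J_int \<open>J \<le> 2 * pi * sqrt Sf\<close> show ?thesis
    unfolding f_def Sf_def by (rule that)
qed

lemma has_integral_rescale_2pi: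
  fixes \<phi> :: "real \<Rightarrow> real"
  assumes "(\<phi> has_integral I) {0..2*pi}"
  shows "((\<lambda>t. \<phi> (2 * pi * t)) has_integral I / (2 * pi)) {0..1}"
proof -
  have "(\<lambda>x. x / (2 * pi)) ` {0..2*pi} = {0..1}"
    by (subst image_divide_atLeastAtMost) simp_all
  then show ?thesis
    using has_integral_stretch_real[OF assms, of "2 * pi"] by simp
qed

lemma norm_contour_integral_circlepath_le:
  fixes h :: "complex \<Rightarrow> complex" and \<phi> :: "real \<Rightarrow> real"
  assumes "0 < r" and phi: "(\<phi> has_integral I) {0..2*pi}"
    and bound: "\<And>\<theta>. \<theta> \<in> {0..2*pi} \<Longrightarrow> cmod (h (complex_of_real r * cis \<theta>)) \<le> \<phi> \<theta>"
  shows "cmod (contour_integral (circlepath 0 r) h) \<le> r * I"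
proof (cases "h contour_integrable_on circlepath 0 r")
  case False
  have "0 \<le> I"
    using phi by (rule has_integral_nonneg) (use bound in \<open>meson norm_ge_zero order_trans\<close>)
  with False show ?thesis
    using \<open>0 < r\<close> by (simp add: not_integrable_contour_integral)
next
  case True
  let ?g = "\<lambda>t. h (circlepath 0 r t) * vector_derivative (circlepath 0 r) (at t within {0..1})"
  have g: "(?g has_integral contour_integral (circlepath 0 r) h) {0..1}"
    using has_contour_integral_integral[OF True] unfolding has_contour_integral_def .
  have majorant: "((\<lambda>t. 2 * pi * r * \<phi> (2 * pi * t)) has_integral r * I) {0..1}"
    using has_integral_mult_right[OF has_integral_rescale_2pi[OF phi], of "2 * pi * r"] by simp
  have "norm (integral {0..1} ?g) \<le> integral {0..1} (\<lambda>t. 2 * pi * r * \<phi> (2 * pi * t))"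
  proof (rule integral_norm_bound_integral)
    show "?g integrable_on {0..1}"
      using g by blast
    show "(\<lambda>t. 2 * pi * r * \<phi> (2 * pi * t)) integrable_on {0..1}"
      using majorant by blast
    fix t :: real assume "t \<in> {0..1}"
    have "circlepath 0 r t = complex_of_real r * cis (2 * pi * t)"
      by (simp add: circlepath cis_conv_exp mult_ac)
    moreover have "norm (vector_derivative (circlepath 0 r) (at t within {0..1})) = 2 * pi * r"
      using \<open>t \<in> {0..1}\<close> \<open>0 < r\<close> by (simp add: vector_derivative_circlepath01 norm_mult)
    ultimately have "norm (?g t) = cmod (h (complex_of_real r * cis (2 * pi * t))) * (2 * pi * r)"
      by (simp add: norm_mult)
    also have "\<dots> \<le> \<phi> (2 * pi * t) * (2 * pi * r)"
      using \<open>t \<in> {0..1}\<close> \<open>0 < r\<close> by (intro mult_right_mono bound) auto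
    finally show "norm (?g t) \<le> 2 * pi * r * \<phi> (2 * pi * t)"
      by (simp add: mult_ac)
  qed
  then show ?thesis
    unfolding integral_unique[OF g] integral_unique[OF majorant] .
qed

lemma norm_form_bracket_le:
  assumes "0 < r"
    and kernel: "\<And>a b x y. cmod a = r \<Longrightarrow> cmod b = r \<Longrightarrow> cmod (cinner (C_kernel \<Phi> a b x) y) \<le> K * norm x * norm y"
    and F: "((\<lambda>\<theta>. norm (F (complex_of_real r * cis \<theta>))) has_integral JF) {0..2*pi}"
    and G: "((\<lambda>\<theta>. norm (G (complex_of_real r * cis \<theta>))) has_integral JG) {0..2*pi}"
  shows "cmod (form_bracket \<Phi> r F G) \<le> r\<^sup>2 * K * JF * JG / (4 * pi\<^sup>2)"
proof -
  define I where "I = (\<lambda>b. contour_integral (circlepath 0 r) (\<lambda>a. cinner (C_kernel \<Phi> a b (F a)) (G b)))"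
  have on_circle: "cmod (complex_of_real r * cis \<theta>) = r" for \<theta>
    using \<open>0 < r\<close> by (simp add: norm_mult)
  have inner: "cmod (I b) \<le> r * (K * norm (G b) * JF)" if "cmod b = r" for b
    unfolding I_def
  proof (rule norm_contour_integral_circlepath_le[OF \<open>0 < r\<close> has_integral_mult_right[OF F]])
    fix \<theta>
    let ?a = "complex_of_real r * cis \<theta>"
    show "cmod (cinner (C_kernel \<Phi> ?a b (F ?a)) (G b)) \<le> K * norm (G b) * norm (F ?a)"
      using kernel[OF on_circle \<open>cmod b = r\<close>, of \<theta> "F ?a" "G b"] by (simp only: mult_ac)
  qed
  have outer: "cmod (contour_integral (circlepath 0 r) (\<lambda>b. cnj (I b))) \<le> r * (r * K * JF * JG)"
  proof (rule norm_contour_integral_circlepath_le[OF \<open>0 < r\<close> has_integral_mult_right[OF G]])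
    show "cmod (cnj (I (complex_of_real r * cis \<theta>))) \<le> r * K * JF * norm (G (complex_of_real r * cis \<theta>))" for \<theta>
      using inner[OF on_circle] by (simp add: mult_ac)
  qed
  have "cmod (form_bracket \<Phi> r F G) = cmod (contour_integral (circlepath 0 r) (\<lambda>b. cnj (I b))) / (4 * pi\<^sup>2)"
    by (simp add: form_bracket_def I_def norm_mult norm_divide norm_power)
  also have "\<dots> \<le> r * (r * K * JF * JG) / (4 * pi\<^sup>2)"
    using outer by (simp add: divide_right_mono)
  finally show ?thesis
    by (simp add: power2_eq_square mult_ac)
qed

lemma norm_form_bracket_le_H2minus:
  assumes "0 < r" and "0 \<le> K"
    and kernel: "\<And>a b x y. cmod a = r \<Longrightarrow> cmod b = r \<Longrightarrow> cmod (cinner (C_kernel \<Phi> a b x) y) \<le> K * norm x * norm y"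
    and "in_H2minus r f" and "in_H2minus r g" and "circle_L2_sum r f F" and "circle_L2_sum r g G"
  shows "cmod (form_bracket \<Phi> r F G)
           \<le> r\<^sup>2 * K * sqrt (\<Sum>u. (1/r) ^ (2 * Suc u) * (norm (f (Suc u)))\<^sup>2)
                     * sqrt (\<Sum>u. (1/r) ^ (2 * Suc u) * (norm (g (Suc u)))\<^sup>2)"
proof -
  define nf ng where "nf = sqrt (\<Sum>u. (1/r) ^ (2 * Suc u) * (norm (f (Suc u)))\<^sup>2)"
    and "ng = sqrt (\<Sum>u. (1/r) ^ (2 * Suc u) * (norm (g (Suc u)))\<^sup>2)"
  obtain JF where JF: "((\<lambda>\<theta>. norm (F (complex_of_real r * cis \<theta>))) has_integral JF) {0..2*pi}"
    and "JF \<le> 2 * pi * nf"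
    using has_integral_norm_circle_le[OF assms(4,6)] unfolding nf_def by blast
  obtain JG where JG: "((\<lambda>\<theta>. norm (G (complex_of_real r * cis \<theta>))) has_integral JG) {0..2*pi}"
    and "JG \<le> 2 * pi * ng"
    using has_integral_norm_circle_le[OF assms(5,7)] unfolding ng_def by blast
  have "0 \<le> JF" "0 \<le> JG"
    using JF JG by (auto intro: has_integral_nonneg)
  have "cmod (form_bracket \<Phi> r F G) \<le> r\<^sup>2 * K * JF * JG / (4 * pi\<^sup>2)"
    using norm_form_bracket_le[OF assms(1) kernel JF JG] .
  also have "\<dots> \<le> r\<^sup>2 * K * (2 * pi * nf) * (2 * pi * ng) / (4 * pi\<^sup>2)"
    using \<open>0 \<le> JF\<close> \<open>0 \<le> JG\<close> \<open>0 \<le> K\<close> \<open>JF \<le> 2 * pi * nf\<close> \<open>JG \<le> 2 * pi * ng\<close>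
    by (intro divide_right_mono mult_mono mult_left_mono) simp_all
  also have "\<dots> = r\<^sup>2 * K * nf * ng"
    by (simp add: power2_eq_square)
  finally show ?thesis
    unfolding nf_def ng_def .
qed

lemma power2_div_le_power2_div_square:
  fixes r r0 :: real
  assumes "0 \<le> r" and "r \<le> r0" and "r0 < 1"
  shows "r\<^sup>2 / (1 - r\<^sup>2) \<le> r0\<^sup>2 / (1 - r0\<^sup>2)\<^sup>2"
proof -
  have "r\<^sup>2 \<le> r0\<^sup>2" and "r0\<^sup>2 < 1"
    using assms by (simp_all add: power_mono abs_square_less_1)
  then have "r\<^sup>2 / (1 - r\<^sup>2) \<le> r0\<^sup>2 / (1 - r0\<^sup>2)"
    by (intro frac_le) simp_all
  also have "\<dots> \<le> r0\<^sup>2 / (1 - r0\<^sup>2)\<^sup>2"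
    using \<open>r0\<^sup>2 < 1\<close> by (intro divide_left_mono) (simp_all add: power2_eq_square mult_le_cancel_left1)
  finally show ?thesis .
qed

theorem proposition3p3:
  fixes \<Phi> :: "complex \<Rightarrow> 'a::complex_inner \<Rightarrow> 'a"
    and r r0 R M :: real
    and f g :: "nat \<Rightarrow> 'a"
    and F G :: "complex \<Rightarrow> 'a"
  assumes "0 < r" and "r < r0" and "r0 < 1" and "R = 1 / r"
    and "\<forall>z\<in>cball 0 r0. bounded_clinear (\<Phi> z)"
    and "op_holomorphic_on (ball 0 r0) \<Phi>"
    and "op_continuous_on (cball 0 r0) \<Phi>"
    and "M = (SUP z\<in>cball 0 r0. onorm (\<Phi> z))"
    and "in_H2minus r f" and "in_H2minus r g"
    and "circle_L2_sum r f F" and "circle_L2_sum r g G"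
  shows "cmod (form_bracket \<Phi> r F G)
           \<le> 2 * M * r0\<^sup>2 / (1 - r0\<^sup>2)\<^sup>2
             * sqrt (\<Sum>u. R ^ (2 * Suc u) * (norm (f (Suc u)))\<^sup>2)
             * sqrt (\<Sum>u. R ^ (2 * Suc u) * (norm (g (Suc u)))\<^sup>2)"
proof -
  have onorm_le_M: "onorm (\<Phi> z) \<le> M" if "z \<in> cball 0 r0" for z
    using onorm_le_SUP_onorm[OF assms(7) compact_cball assms(5) that] assms(8) by simp
  have "0 \<in> cball 0 r0"
    using assms(1,2) by simp
  then have "0 \<le> M"
    using assms(5) onorm_le_M onorm_pos_le[OF bounded_clinear_imp_bounded_linear] by (meson order_trans)
  have "r\<^sup>2 < 1"
    using assms(1-3) by (simp add: abs_square_less_1)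
  have const_le: "r\<^sup>2 * (2 * M / (1 - r\<^sup>2)) \<le> 2 * M * r0\<^sup>2 / (1 - r0\<^sup>2)\<^sup>2"
    using mult_left_mono[OF power2_div_le_power2_div_square[of r r0], of "2 * M"] assms(1-3) \<open>0 \<le> M\<close>
    by (simp add: mult_ac)
  have kernel: "cmod (cinner (C_kernel \<Phi> a b x) y) \<le> 2 * M / (1 - r\<^sup>2) * norm x * norm y"
    if "cmod a = r" and "cmod b = r" for a b x y
    using that assms(1-3,5) onorm_le_M by (intro norm_cinner_C_kernel_le) auto
  have "cmod (form_bracket \<Phi> r F G)
      \<le> r\<^sup>2 * (2 * M / (1 - r\<^sup>2)) * sqrt (\<Sum>u. R ^ (2 * Suc u) * (norm (f (Suc u)))\<^sup>2)
                                   * sqrt (\<Sum>u. R ^ (2 * Suc u) * (norm (g (Suc u)))\<^sup>2)"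
    unfolding assms(4) using \<open>0 \<le> M\<close> \<open>r\<^sup>2 < 1\<close>
    by (intro norm_form_bracket_le_H2minus[OF assms(1) _ kernel assms(9-12)]) simp
  also have "\<dots> \<le> 2 * M * r0\<^sup>2 / (1 - r0\<^sup>2)\<^sup>2 * sqrt (\<Sum>u. R ^ (2 * Suc u) * (norm (f (Suc u)))\<^sup>2)
                                             * sqrt (\<Sum>u. R ^ (2 * Suc u) * (norm (g (Suc u)))\<^sup>2)"
    using const_le assms(4,9,10) by (intro mult_right_mono) (simp_all add: in_H2minus_def suminf_nonneg)
  finally show ?thesis .
qed

end
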